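(* Let $K>0$, $D>0$, $\sigma>0$, $r\in\mathbf{R}$ and $0<\tau<T$. For $S_->0$ define \[ V(S_-,\tau)=\begin{cases}(S_--D)\,N\!\left(\bar d+\sigma\sqrt{T-\tau}\right)-Ke^{-r(T-\tau)}N(\bar d), & S_->D,\\ 0, & S_-\le D,\end{cases} \qquad \bar d=\frac{\ln(S_--D)-\ln K+\left(r-\frac12\sigma^2\right)(T-\tau)}{\sigma\sqrt{T-\tau}}, \] where $N$ is the standard normal cumulative distribution function. Fix $S^*>D$ and an integer $M\ge1$; set $S_i=D+i\,\frac{S^*-D}{M}$ for $i=0,\dots,M$ and \[ \alpha_i=\frac{M}{S^*-D}\left[V(S_i,\tau)-V(S_{i-1},\tau)\right],\quad i=1,\dots,M . \] Define \[ V_1^+(S_-,\tau)=\sum_{i=1}^M\left[\alpha_i(S_--S_{i-1})+V(S_{i-1},\tau)\right]\chi_{[S_{i-1},S_i]}(S_-),\qquad V_2^+(S_-,\tau)=\left[(S_--S^* )+V(S^*,\tau)\right]\chi_{[S^*,\infty)}(S_-), \] where $\chi_I$ is the characteristic function of the set $I$. Then $V(S_-,\tau)\le V_1^+(S_-,\tau)+V_2^+(S_-,\tau)$ for all $S_->D$, and the function $V_1^++V_2^+$ is piecewise linear and non-negative. If $S_-\le D$, then $V(S_-,\tau)=0$.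
   Context: $V(S_-,\tau)$ is the value, just before a dividend $D$ is paid at time $\tau$, of a European call option with strike $K$ and maturity $T$ in a Black-Scholes economy (risk-free rate $r$, volatility $\sigma$), as a function of the stock price $S_-$ just before the dividend payment. Note $V(S_0,\tau)=V(D,\tau)=0$. *)

theory Defs
  imports "HOL-Probability.Probability"
begin

definition Ncdf :: "real \<Rightarrow> real" where
  "Ncdf = cdf (density lborel std_normal_density)"

definition dbar :: "real \<Rightarrow> real \<Rightarrow> real \<Rightarrow> real \<Rightarrow> real \<Rightarrow> real \<Rightarrow> real \<Rightarrow> real" where
  "dbar K D r \<sigma> T \<tau> S =
     (ln (S - D) - ln K + (r - \<sigma>^2 / 2) * (T - \<tau>)) / (\<sigma> * sqrt (T - \<tau>))"

text \<open>Value of the call just before the dividend, as a function of S_-.\<close>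
definition Vcall :: "real \<Rightarrow> real \<Rightarrow> real \<Rightarrow> real \<Rightarrow> real \<Rightarrow> real \<Rightarrow> real \<Rightarrow> real" where
  "Vcall K D r \<sigma> T \<tau> S =
     (if S > D then
        (S - D) * Ncdf (dbar K D r \<sigma> T \<tau> S + \<sigma> * sqrt (T - \<tau>))
        - K * exp (- r * (T - \<tau>)) * Ncdf (dbar K D r \<sigma> T \<tau> S)
      else 0)"

definition chi :: "real set \<Rightarrow> real \<Rightarrow> real" where
  "chi I x = (if x \<in> I then 1 else 0)"

definition piecewise_linear :: "(real \<Rightarrow> real) \<Rightarrow> bool" where
  "piecewise_linear f \<longleftrightarrow> (\<exists>P. finite P \<and>
     (\<forall>I. is_interval I \<and> I \<inter> P = {} \<longrightarrow> (\<exists>a b. \<forall>x\<in>I. f x = a * x + b)))"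

end

theory Submission
  imports Defs
begin

(*
  The delta of V is N(dbar + sigma sqrt(T - tau)): differentiating V, the two density terms
  cancel by the Black-Scholes identity
    (S - D) phi(dbar + sigma sqrt(T - tau)) = K exp(-r (T - tau)) phi(dbar).
  The delta is nondecreasing with values in [0, 1], and V(S) tends to 0 as S tends to D from
  the right, so on [D, oo) the function V is convex, nondecreasing and 1-Lipschitz with
  V(D) = 0; in particular it is nonnegative. By convexity V lies below its secants on the grid
  cells covering [D, Sstar], and by the Lipschitz bound it lies below the line of slope 1 through
  (Sstar, V(Sstar)) to the right of Sstar.
*)

lemma finite_borel_measure_std_normal:
  "finite_borel_measure (density lborel std_normal_density)"
  by (rule real_distribution.finite_borel_measure_M[OF real_dist_normal_dist])

lemma Ncdf_nonneg: "0 \<le> Ncdf x"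
  unfolding Ncdf_def by (rule finite_borel_measure.cdf_nonneg[OF finite_borel_measure_std_normal])

lemma Ncdf_le_1: "Ncdf x \<le> 1"
  unfolding Ncdf_def by (rule real_distribution.cdf_bounded_prob[OF real_dist_normal_dist])

lemma Ncdf_mono: "x \<le> y \<Longrightarrow> Ncdf x \<le> Ncdf y"
  unfolding Ncdf_def by (rule finite_borel_measure.cdf_nondecreasing[OF finite_borel_measure_std_normal])

lemma Ncdf_at_bot: "(Ncdf \<longlongrightarrow> 0) at_bot"
  unfolding Ncdf_def by (rule finite_borel_measure.cdf_lim_at_bot[OF finite_borel_measure_std_normal])

lemma Ncdf_diff_eq_interval_integral:
  assumes "a < b"
  shows "Ncdf b - Ncdf a = (LBINT t=a..b. std_normal_density t)"
proof -
  have "Ncdf b - Ncdf a = measure (density lborel std_normal_density) {a<..b}"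
    unfolding Ncdf_def
    by (rule finite_borel_measure.cdf_diff_eq[OF finite_borel_measure_std_normal assms])
  also have "\<dots> = (LINT t|density lborel std_normal_density. indicator {a<..b} t)"
    by simp
  also have "\<dots> = (LINT t|lborel. std_normal_density t *\<^sub>R indicator {a<..b} t)"
    by (subst integral_density) auto
  also have "\<dots> = (LBINT t=a..b. std_normal_density t)"
    using assms by (simp add: interval_integral_Ioc set_lebesgue_integral_def mult.commute)
  finally show ?thesis .
qed

lemma Ncdf_has_real_derivative: "(Ncdf has_real_derivative std_normal_density x) (at x)"
proof -
  have "continuous_on {x - 1..x + 1} std_normal_density"
    unfolding std_normal_density_def by (intro continuous_intros) auto
  then have "((\<lambda>u. LBINT t=x - 1..u. std_normal_density t) has_vector_derivative std_normal_density x)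
      (at x within {x - 1..x + 1})"
    by (intro interval_integral_FTC2) auto
  then have "((\<lambda>u. Ncdf (x - 1) + (LBINT t=x - 1..u. std_normal_density t))
      has_real_derivative std_normal_density x) (at x)"
    by (auto simp: at_within_Icc_at has_real_derivative_iff_has_vector_derivative
        intro!: derivative_eq_intros)
  then show ?thesis
    by (rule has_field_derivative_transform_within_open[where S = "{x - 1<..}"])
      (auto simp: Ncdf_diff_eq_interval_integral[symmetric])
qed

lemma std_normal_density_shift:
  assumes "a > 0" "b > 0" and "d * v = ln a - ln b - v\<^sup>2 / 2"
  shows "a * std_normal_density (d + v) = b * std_normal_density d"
proof -
  have "- (d + v)\<^sup>2 / 2 = (ln b - ln a) + - d\<^sup>2 / 2"
    using assms(3) by (simp add: power2_eq_square field_simps)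
  then have "exp (- (d + v)\<^sup>2 / 2) = b / a * exp (- d\<^sup>2 / 2)"
    using assms(1,2) by (simp only: exp_add exp_diff exp_ln)
  then show ?thesis
    using assms(1) by (simp add: std_normal_density_def)
qed

lemma convex_on_atLeast_if_continuous_at_right:
  fixes f :: "real \<Rightarrow> real"
  assumes convex: "convex_on {a<..} f" and cont: "continuous (at_right a) f"
  shows "convex_on {a..} f"
proof (rule convex_on_linorderI)
  have chord: "f ((1 - s) * u + s * w) \<le> (1 - s) * f u + s * f w"
    if "a < u" "a < w" "0 \<le> s" "s \<le> 1" for s u w
    using convex_onD[OF convex, of s u w] that by simp
  fix t x y :: real
  assume t: "0 < t" "t < 1" and xy: "x \<in> {a..}" "y \<in> {a..}" "x < y"
  show "f ((1 - t) *\<^sub>R x + t *\<^sub>R y) \<le> (1 - t) * f x + t * f y"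
  proof (cases "x = a")
    case False
    with xy t show ?thesis by (simp add: chord)
  next
    case True
    \<comment> \<open>Pass to the limit u \<rightarrow> a+ in the chord inequality for u, t, y.\<close>
    let ?z = "\<lambda>u. (1 - t) * u + t * y"
    have "a < ?z a"
      using xy True t by (simp add: algebra_simps)
    then have cont_z: "isCont f (?z a)"
      using convex_on_continuous[OF _ convex] by (simp add: continuous_on_eq_continuous_at)
    have "((\<lambda>u. (1 - t) * f u + t * f y) \<longlongrightarrow> (1 - t) * f a + t * f y) (at_right a)"
      using cont by (intro tendsto_intros) (simp add: continuous_within)
    moreover have "((\<lambda>u. f (?z u)) \<longlongrightarrow> f (?z a)) (at_right a)"
      using cont_z by (intro isCont_tendsto_compose[where g = f] tendsto_intros)
    moreover have "\<forall>\<^sub>F u in at_right a. f (?z u) \<le> (1 - t) * f u + t * f y"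
      using eventually_at_right_less[of a]
      by eventually_elim (use t xy in \<open>simp add: chord\<close>)
    ultimately have "f (?z a) \<le> (1 - t) * f a + t * f y"
      by (rule tendsto_le[OF trivial_limit_at_right_real])
    then show ?thesis
      using True by simp
  qed
qed (simp add: convex_real_interval)

lemma piecewise_linear_affine: "piecewise_linear (\<lambda>x. a * x + b)"
  unfolding piecewise_linear_def by blast

lemma piecewise_linearE:
  assumes "piecewise_linear f"
  obtains P where "finite P"
    "\<And>I. is_interval I \<Longrightarrow> I \<inter> P = {} \<Longrightarrow> \<exists>a b. \<forall>x\<in>I. f x = a * x + b"
  using assms that unfolding piecewise_linear_def by metis

lemma piecewise_linear_add:
  assumes "piecewise_linear f" "piecewise_linear g"
  shows "piecewise_linear (\<lambda>x. f x + g x)"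
proof -
  obtain P where P: "finite P"
    "\<And>I. is_interval I \<Longrightarrow> I \<inter> P = {} \<Longrightarrow> \<exists>a b. \<forall>x\<in>I. f x = a * x + b"
    using piecewise_linearE[OF assms(1)] by metis
  obtain Q where Q: "finite Q"
    "\<And>I. is_interval I \<Longrightarrow> I \<inter> Q = {} \<Longrightarrow> \<exists>a b. \<forall>x\<in>I. g x = a * x + b"
    using piecewise_linearE[OF assms(2)] by metis
  show ?thesis
    unfolding piecewise_linear_def
  proof (intro exI[of _ "P \<union> Q"] conjI allI impI)
    fix I :: "real set"
    assume I: "is_interval I \<and> I \<inter> (P \<union> Q) = {}"
    then have "is_interval I" "I \<inter> P = {}" "I \<inter> Q = {}"
      by auto
    then obtain a b c e where "\<forall>x\<in>I. f x = a * x + b" "\<forall>x\<in>I. g x = c * x + e"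
      using P(2) Q(2) by metis
    then have "\<forall>x\<in>I. f x + g x = (a + c) * x + (b + e)"
      by (simp add: algebra_simps)
    then show "\<exists>a b. \<forall>x\<in>I. f x + g x = a * x + b"
      by blast
  qed (use P(1) Q(1) in simp)
qed

lemma piecewise_linear_sum:
  assumes "\<And>i. i \<in> A \<Longrightarrow> piecewise_linear (f i)"
  shows "piecewise_linear (\<lambda>x. \<Sum>i\<in>A. f i x)"
  using assms
proof (induction A rule: infinite_finite_induct)
  case (infinite A)
  then show ?case
    using piecewise_linear_affine[of 0 0] by simp
next
  case empty
  then show ?case
    using piecewise_linear_affine[of 0 0] by simp
next
  case (insert i A)
  then show ?case
    by (simp add: piecewise_linear_add)
qed

lemma piecewise_linear_mult_chi:
  assumes "piecewise_linear g" and "finite B"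
    and "\<And>I. is_interval I \<Longrightarrow> I \<inter> B = {} \<Longrightarrow> I \<subseteq> J \<or> I \<inter> J = {}"
  shows "piecewise_linear (\<lambda>x. g x * chi J x)"
proof -
  obtain P where P: "finite P"
    "\<And>I. is_interval I \<Longrightarrow> I \<inter> P = {} \<Longrightarrow> \<exists>a b. \<forall>x\<in>I. g x = a * x + b"
    using piecewise_linearE[OF assms(1)] by metis
  show ?thesis
    unfolding piecewise_linear_def
  proof (intro exI[of _ "P \<union> B"] conjI allI impI)
    fix I :: "real set"
    assume I: "is_interval I \<and> I \<inter> (P \<union> B) = {}"
    then have "is_interval I" "I \<inter> P = {}" "I \<inter> B = {}"
      by auto
    then obtain a b where "\<forall>x\<in>I. g x = a * x + b" and "I \<subseteq> J \<or> I \<inter> J = {}"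
      using P(2) assms(3) by metis
    then have "(\<forall>x\<in>I. g x * chi J x = a * x + b) \<or> (\<forall>x\<in>I. g x * chi J x = 0 * x + 0)"
      unfolding chi_def by auto
    then show "\<exists>a b. \<forall>x\<in>I. g x * chi J x = a * x + b"
      by blast
  qed (use P(1) assms(2) in simp)
qed

lemma is_interval_subset_or_disjoint_atLeast:
  fixes I :: "real set"
  assumes "is_interval I" "l \<notin> I"
  shows "I \<subseteq> {l..} \<or> I \<inter> {l..} = {}"
proof (rule ccontr)
  assume "\<not> ?thesis"
  then obtain x y where "x \<in> I" "l \<le> x" "y \<in> I" "y < l"
    by (auto simp: not_le)
  then have "l \<in> I"
    using assms(1) unfolding is_interval_1 by (meson less_imp_le)
  with assms(2) show False
    by simp
qed

lemma is_interval_subset_or_disjoint_atLeastAtMost: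
  fixes I :: "real set"
  assumes "is_interval I" "l \<notin> I" "u \<notin> I"
  shows "I \<subseteq> {l..u} \<or> I \<inter> {l..u} = {}"
proof (rule ccontr)
  assume "\<not> ?thesis"
  then obtain x y where x: "x \<in> I" "l \<le> x" "x \<le> u" and y: "y \<in> I" "y < l \<or> u < y"
    by (auto simp: not_le) blast+
  then have "l \<in> I \<or> u \<in> I"
    using assms(1) unfolding is_interval_1 by (meson less_imp_le)
  with assms(2,3) show False
    by simp
qed

lemma piecewise_linear_mult_chi_atLeast:
  assumes "piecewise_linear g"
  shows "piecewise_linear (\<lambda>x. g x * chi {l..} x)"
proof (rule piecewise_linear_mult_chi[where B = "{l}"])
  show "I \<subseteq> {l..} \<or> I \<inter> {l..} = {}" if "is_interval I" "I \<inter> {l} = {}" for I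
    using that by (intro is_interval_subset_or_disjoint_atLeast) auto
qed (use assms in simp_all)

lemma piecewise_linear_mult_chi_atLeastAtMost:
  assumes "piecewise_linear g"
  shows "piecewise_linear (\<lambda>x. g x * chi {l..u} x)"
proof (rule piecewise_linear_mult_chi[where B = "{l, u}"])
  show "I \<subseteq> {l..u} \<or> I \<inter> {l..u} = {}" if "is_interval I" "I \<inter> {l, u} = {}" for I
    using that by (intro is_interval_subset_or_disjoint_atLeastAtMost) auto
qed (use assms in simp_all)

(* The cells are closed, so at an interior node both adjacent terms are active and the sum is
  twice the node value there; only lower bounds by secant_sum are needed. *)
definition secant_sum :: "(real \<Rightarrow> real) \<Rightarrow> (nat \<Rightarrow> real) \<Rightarrow> nat \<Rightarrow> real \<Rightarrow> real" where
  "secant_sum f s n x = (\<Sum>i=1..n.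
     ((f (s i) - f (s (i - 1))) / (s i - s (i - 1)) * (x - s (i - 1)) + f (s (i - 1)))
       * chi {s (i - 1)..s i} x)"

lemma secant_mult_chi_nonneg:
  fixes a b x p q :: real
  assumes "0 \<le> p" "0 \<le> q"
  shows "0 \<le> ((q - p) / (b - a) * (x - a) + p) * chi {a..b} x"
proof (cases "x \<in> {a..b}")
  case True
  show ?thesis
  proof (cases "a = b")
    case False
    define t where "t = (x - a) / (b - a)"
    have "0 \<le> t" "t \<le> 1"
      using True False by (simp_all add: t_def)
    moreover have "(q - p) / (b - a) * (x - a) + p = (1 - t) * p + t * q"
      using False by (simp add: t_def divide_simps) (simp add: algebra_simps)
    ultimately show ?thesis
      using True assms by (simp add: chi_def)
  qed (use True assms in \<open>simp add: chi_def\<close>)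
qed (auto simp: chi_def)

lemma secant_sum_nonneg:
  assumes "\<And>i. i \<le> n \<Longrightarrow> 0 \<le> f (s i)"
  shows "0 \<le> secant_sum f s n x"
  unfolding secant_sum_def by (intro sum_nonneg secant_mult_chi_nonneg assms) auto

lemma secant_sum_piecewise_linear: "piecewise_linear (secant_sum f s n)"
proof -
  have "piecewise_linear (\<lambda>x. c * (x - a) + p)" for c a p
    using piecewise_linear_affine[of c "p - c * a"] by (simp add: algebra_simps)
  then show ?thesis
    unfolding secant_sum_def[abs_def]
    by (intro piecewise_linear_sum piecewise_linear_mult_chi_atLeastAtMost)
qed

lemma exists_grid_cell:
  fixes s :: "nat \<Rightarrow> real"
  assumes "s 0 \<le> x" "x \<le> s n" "0 < n"
  shows "\<exists>i\<in>{1..n}. x \<in> {s (i - 1)..s i}"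
  using assms
proof (induction n)
  case (Suc n)
  show ?case
  proof (cases "0 < n \<and> x \<le> s n")
    case True
    then obtain i where "i \<in> {1..n}" "x \<in> {s (i - 1)..s i}"
      using Suc.IH Suc.prems(1) by blast
    then show ?thesis
      by (intro bexI[of _ i]) auto
  next
    case False
    with Suc.prems have "x \<in> {s n..s (Suc n)}"
      by auto
    then show ?thesis
      by (intro bexI[of _ "Suc n"]) auto
  qed
qed simp

lemma le_secant_sum:
  assumes "mono s" "convex_on {s 0..s n} f" "\<And>i. i \<le> n \<Longrightarrow> 0 \<le> f (s i)"
    and "0 < n" "x \<in> {s 0..s n}"
  shows "f x \<le> secant_sum f s n x"
proof -
  obtain i where i: "i \<in> {1..n}" "x \<in> {s (i - 1)..s i}"
    using exists_grid_cell[of s x n] assms(4,5) by auto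
  have "s 0 \<le> s (i - 1)" "s i \<le> s n"
    using i(1) by (auto intro: monoD[OF assms(1)])
  then have "convex_on {s (i - 1)..s i} f"
    by (intro convex_on_subset[OF assms(2)]) auto
  then have "f x \<le> (f (s i) - f (s (i - 1))) / (s i - s (i - 1)) * (x - s (i - 1)) + f (s (i - 1))"
    by (rule convex_onD_Icc'[OF _ i(2)])
  also have "\<dots> = ((f (s i) - f (s (i - 1))) / (s i - s (i - 1)) * (x - s (i - 1)) + f (s (i - 1)))
      * chi {s (i - 1)..s i} x"
    using i(2) by (simp add: chi_def)
  also have "\<dots> \<le> secant_sum f s n x"
    unfolding secant_sum_def
    by (intro member_le_sum[OF i(1)] secant_mult_chi_nonneg assms(3)) auto
  finally show ?thesis .
qed

lemma le_secant_sum_add_ray: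
  assumes "mono s" "0 < n" "convex_on {s 0..s n} f" "\<And>i. i \<le> n \<Longrightarrow> 0 \<le> f (s i)"
    and "\<And>y. s n \<le> y \<Longrightarrow> f y \<le> f (s n) + (y - s n)" and "s 0 \<le> x"
  shows "f x \<le> secant_sum f s n x + ((x - s n) + f (s n)) * chi {s n..} x"
proof (cases "x \<le> s n")
  case True
  then have "f x \<le> secant_sum f s n x"
    using assms by (intro le_secant_sum) auto
  moreover have "0 \<le> ((x - s n) + f (s n)) * chi {s n..} x"
    using True assms(4)[of n] by (auto simp: chi_def)
  ultimately show ?thesis
    by simp
next
  case False
  then have "f x \<le> ((x - s n) + f (s n)) * chi {s n..} x"
    using assms(5)[of x] by (simp add: chi_def)
  moreover have "0 \<le> secant_sum f s n x"
    using assms(4) by (rule secant_sum_nonneg)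
  ultimately show ?thesis
    by simp
qed

context
  fixes K D r \<sigma> T \<tau> :: real
  assumes K_pos: "K > 0" and \<sigma>_pos: "\<sigma> > 0" and \<tau>_less_T: "\<tau> < T"
begin

lemma dbar_has_real_derivative:
  assumes "x > D"
  shows "(dbar K D r \<sigma> T \<tau> has_real_derivative 1 / ((x - D) * (\<sigma> * sqrt (T - \<tau>)))) (at x)"
  unfolding dbar_def[abs_def]
  using assms \<sigma>_pos \<tau>_less_T by (auto intro!: derivative_eq_intros)

lemma dbar_at_right: "filterlim (dbar K D r \<sigma> T \<tau>) at_bot (at_right D)"
proof -
  define c where "c = - ln K + (r - \<sigma>\<^sup>2 / 2) * (T - \<tau>)"
  have "filterlim (\<lambda>y. ln (y - D)) at_bot (at_right D)"
    unfolding filterlim_at_right_to_0[of _ _ D] using ln_at_0 by simp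
  then have "filterlim (\<lambda>y. c + ln (y - D)) at_bot (at_right D)"
    by (simp add: filterlim_tendsto_add_at_bot_iff[OF tendsto_const])
  then have "filterlim (\<lambda>y. 1 / (\<sigma> * sqrt (T - \<tau>)) * (c + ln (y - D))) at_bot (at_right D)"
    using \<sigma>_pos \<tau>_less_T by (intro filterlim_tendsto_pos_mult_at_bot[OF tendsto_const]) auto
  moreover have "dbar K D r \<sigma> T \<tau> = (\<lambda>y. 1 / (\<sigma> * sqrt (T - \<tau>)) * (c + ln (y - D)))"
    by (simp add: fun_eq_iff dbar_def c_def)
  ultimately show ?thesis
    by simp
qed

lemma std_normal_density_dbar:
  assumes "x > D"
  shows "(x - D) * std_normal_density (dbar K D r \<sigma> T \<tau> x + \<sigma> * sqrt (T - \<tau>))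
    = K * exp (- r * (T - \<tau>)) * std_normal_density (dbar K D r \<sigma> T \<tau> x)"
proof (rule std_normal_density_shift)
  define v where "v = \<sigma> * sqrt (T - \<tau>)"
  have "v > 0"
    using \<sigma>_pos \<tau>_less_T by (simp add: v_def)
  then have "dbar K D r \<sigma> T \<tau> x * v = ln (x - D) - ln K + (r - \<sigma>\<^sup>2 / 2) * (T - \<tau>)"
    unfolding dbar_def v_def[symmetric] by simp
  moreover have "v\<^sup>2 = \<sigma>\<^sup>2 * (T - \<tau>)"
    using \<tau>_less_T by (simp add: v_def power_mult_distrib)
  moreover have "ln (K * exp (- r * (T - \<tau>))) = ln K - r * (T - \<tau>)"
    using K_pos by (simp add: ln_mult)
  ultimately show "dbar K D r \<sigma> T \<tau> x * v = ln (x - D) - ln (K * exp (- r * (T - \<tau>))) - v\<^sup>2 / 2"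
    by (simp add: field_simps)
qed (use assms K_pos in auto)

lemma Vcall_has_real_derivative:
  assumes x: "x > D"
  shows "(Vcall K D r \<sigma> T \<tau> has_real_derivative Ncdf (dbar K D r \<sigma> T \<tau> x + \<sigma> * sqrt (T - \<tau>))) (at x)"
proof -
  define v where "v = \<sigma> * sqrt (T - \<tau>)"
  define d where "d = dbar K D r \<sigma> T \<tau>"
  define k where "k = K * exp (- r * (T - \<tau>))"
  define d' where "d' = 1 / ((x - D) * v)"
  have d: "(d has_real_derivative d') (at x)"
    using dbar_has_real_derivative[OF x] by (simp add: d_def d'_def v_def)
  have "((\<lambda>y. Ncdf (d y + v)) has_real_derivative std_normal_density (d x + v) * d') (at x)"
    by (rule DERIV_chain2[OF Ncdf_has_real_derivative]) (use d in \<open>auto intro!: derivative_eq_intros\<close>)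
  moreover have "((\<lambda>y. Ncdf (d y)) has_real_derivative std_normal_density (d x) * d') (at x)"
    by (rule DERIV_chain2[OF Ncdf_has_real_derivative d])
  ultimately have "((\<lambda>y. (y - D) * Ncdf (d y + v) - k * Ncdf (d y)) has_real_derivative
      Ncdf (d x + v) + (x - D) * (std_normal_density (d x + v) * d')
        - k * (std_normal_density (d x) * d')) (at x)"
    by (auto intro!: derivative_eq_intros)
  \<comment> \<open>The two density terms cancel.\<close>
  then have "((\<lambda>y. (y - D) * Ncdf (d y + v) - k * Ncdf (d y)) has_real_derivative Ncdf (d x + v)) (at x)"
    using std_normal_density_dbar[OF x] by (simp flip: mult.assoc add: d_def v_def k_def)
  then have "(Vcall K D r \<sigma> T \<tau> has_real_derivative Ncdf (d x + v)) (at x)"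
    by (rule has_field_derivative_transform_within_open[where S = "{D<..}"])
      (use x in \<open>auto simp: Vcall_def d_def v_def k_def\<close>)
  then show ?thesis
    by (simp add: d_def v_def)
qed

lemma Vcall_tendsto_at_right: "(Vcall K D r \<sigma> T \<tau> \<longlongrightarrow> 0) (at_right D)"
proof -
  define v where "v = \<sigma> * sqrt (T - \<tau>)"
  define d where "d = dbar K D r \<sigma> T \<tau>"
  have "filterlim (\<lambda>y. d y + v) at_bot (at_right D)"
    using dbar_at_right by (simp add: d_def add.commute filterlim_tendsto_add_at_bot_iff[OF tendsto_const])
  then have "((\<lambda>y. Ncdf (d y + v)) \<longlongrightarrow> 0) (at_right D)"
    by (rule filterlim_compose[OF Ncdf_at_bot])
  moreover have "((\<lambda>y. Ncdf (d y)) \<longlongrightarrow> 0) (at_right D)"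
    unfolding d_def by (rule filterlim_compose[OF Ncdf_at_bot dbar_at_right])
  ultimately have "((\<lambda>y. (y - D) * Ncdf (d y + v) - K * exp (- r * (T - \<tau>)) * Ncdf (d y))
      \<longlongrightarrow> (D - D) * 0 - K * exp (- r * (T - \<tau>)) * 0) (at_right D)"
    by (intro tendsto_intros)
  moreover have "\<forall>\<^sub>F y in at_right D.
      (y - D) * Ncdf (d y + v) - K * exp (- r * (T - \<tau>)) * Ncdf (d y) = Vcall K D r \<sigma> T \<tau> y"
    using eventually_at_right_less[of D] by eventually_elim (simp add: Vcall_def d_def v_def)
  ultimately show ?thesis
    by (simp add: tendsto_cong)
qed

lemma Vcall_continuous_on: "continuous_on {D..} (Vcall K D r \<sigma> T \<tau>)"
proof -
  have "continuous (at x within {D..}) (Vcall K D r \<sigma> T \<tau>)" if "D \<le> x" for x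
  proof (cases "x = D")
    case True
    then show ?thesis
      using Vcall_tendsto_at_right
      by (simp add: continuous_within at_within_Ici_at_right Vcall_def)
  next
    case False
    with that have "D < x"
      by simp
    then show ?thesis
      by (rule continuous_at_imp_continuous_within[OF DERIV_isCont[OF Vcall_has_real_derivative]])
  qed
  then show ?thesis
    by (simp add: continuous_on_eq_continuous_within)
qed

lemma Vcall_mono:
  assumes "D \<le> x" "x \<le> y"
  shows "Vcall K D r \<sigma> T \<tau> x \<le> Vcall K D r \<sigma> T \<tau> y"
proof (rule DERIV_nonneg_imp_increasing_open[OF assms(2)])
  fix u assume "x < u" "u < y"
  with assms have "D < u"
    by simp
  then show "\<exists>d. (Vcall K D r \<sigma> T \<tau> has_real_derivative d) (at u) \<and> 0 \<le> d"
    using Vcall_has_real_derivative Ncdf_nonneg by blast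
next
  show "continuous_on {x..y} (Vcall K D r \<sigma> T \<tau>)"
    using assms by (intro continuous_on_subset[OF Vcall_continuous_on]) auto
qed

lemma Vcall_nonneg: "0 \<le> Vcall K D r \<sigma> T \<tau> x"
  using Vcall_mono[of D x] by (cases "D \<le> x") (auto simp: Vcall_def)

lemma Vcall_le_add:
  assumes "D \<le> x" "x \<le> y"
  shows "Vcall K D r \<sigma> T \<tau> y \<le> Vcall K D r \<sigma> T \<tau> x + (y - x)"
proof -
  have "x - Vcall K D r \<sigma> T \<tau> x \<le> y - Vcall K D r \<sigma> T \<tau> y"
  proof (rule DERIV_nonneg_imp_increasing_open[OF assms(2)])
    fix u assume "x < u" "u < y"
    with assms have "D < u"
      by simp
    then have "((\<lambda>z. z - Vcall K D r \<sigma> T \<tau> z) has_real_derivative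
        1 - Ncdf (dbar K D r \<sigma> T \<tau> u + \<sigma> * sqrt (T - \<tau>))) (at u)"
      by (intro derivative_intros Vcall_has_real_derivative)
    then show "\<exists>d. ((\<lambda>z. z - Vcall K D r \<sigma> T \<tau> z) has_real_derivative d) (at u) \<and> 0 \<le> d"
      using Ncdf_le_1 by auto
  next
    show "continuous_on {x..y} (\<lambda>z. z - Vcall K D r \<sigma> T \<tau> z)"
      using assms by (intro continuous_intros continuous_on_subset[OF Vcall_continuous_on]) auto
  qed
  then show ?thesis
    by simp
qed

lemma Vcall_convex_on: "convex_on {D..} (Vcall K D r \<sigma> T \<tau>)"
proof (rule convex_on_atLeast_if_continuous_at_right)
  show "convex_on {D<..} (Vcall K D r \<sigma> T \<tau>)"
  proof (rule convex_on_realI)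
    show "(Vcall K D r \<sigma> T \<tau> has_real_derivative Ncdf (dbar K D r \<sigma> T \<tau> x + \<sigma> * sqrt (T - \<tau>))) (at x)"
      if "x \<in> {D<..}" for x
      using that by (simp add: Vcall_has_real_derivative)
    fix x y assume "x \<in> {D<..}" "y \<in> {D<..}" "x \<le> y"
    then have "dbar K D r \<sigma> T \<tau> x \<le> dbar K D r \<sigma> T \<tau> y"
      using \<sigma>_pos \<tau>_less_T by (simp add: dbar_def divide_right_mono)
    then show "Ncdf (dbar K D r \<sigma> T \<tau> x + \<sigma> * sqrt (T - \<tau>))
        \<le> Ncdf (dbar K D r \<sigma> T \<tau> y + \<sigma> * sqrt (T - \<tau>))"
      by (simp add: Ncdf_mono)
  qed simp
  show "continuous (at_right D) (Vcall K D r \<sigma> T \<tau>)"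
    using Vcall_tendsto_at_right by (simp add: continuous_within Vcall_def)
qed

end

theorem lemma2:
  fixes K D \<sigma> r T \<tau> Sstar :: real and M :: nat
  assumes "K > 0" "D > 0" "\<sigma> > 0" "0 < \<tau>" "\<tau> < T"
    and "Sstar > D" and "M \<ge> 1"
  defines "V \<equiv> Vcall K D r \<sigma> T \<tau>"
    and "S \<equiv> (\<lambda>i::nat. D + real i * (Sstar - D) / real M)"
  defines "\<alpha> \<equiv> (\<lambda>i::nat. real M / (Sstar - D) * (V (S i) - V (S (i - 1))))"
  defines "V1 \<equiv> (\<lambda>x. \<Sum>i=1..M. (\<alpha> i * (x - S (i - 1)) + V (S (i - 1))) * chi {S (i - 1)..S i} x)"
    and "V2 \<equiv> (\<lambda>x. ((x - Sstar) + V Sstar) * chi {Sstar..} x)"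
  shows "(\<forall>x > D. V x \<le> V1 x + V2 x)
    \<and> piecewise_linear (\<lambda>x. V1 x + V2 x)
    \<and> (\<forall>x. V1 x + V2 x \<ge> 0)
    \<and> (\<forall>x \<le> D. V x = 0)"
proof -
  have S_0: "S 0 = D" and S_M: "S M = Sstar"
    using assms(7) by (simp_all add: S_def)
  have S_mono: "mono S"
    unfolding S_def using assms(6)
    by (intro monoI add_left_mono divide_right_mono mult_right_mono) auto
  have "S i - S (i - 1) = (Sstar - D) / real M" if "i \<ge> 1" for i
    using that by (simp add: S_def of_nat_diff diff_divide_distrib[symmetric] algebra_simps)
  then have "\<alpha> i = (V (S i) - V (S (i - 1))) / (S i - S (i - 1))" if "i \<ge> 1" for i
    using that unfolding \<alpha>_def by simp
  then have V1_eq: "V1 = secant_sum V S M"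
    unfolding V1_def secant_sum_def by (intro ext sum.cong) simp_all
  have V2_eq: "V2 = (\<lambda>x. ((x - S M) + V (S M)) * chi {S M..} x)"
    by (simp add: V2_def S_M)
  have V_nonneg: "0 \<le> V x" for x
    unfolding V_def using Vcall_nonneg assms(1,3,5) .
  have "V x \<le> V1 x + V2 x" if "x > D" for x
    unfolding V1_eq V2_eq V_def
  proof (rule le_secant_sum_add_ray[OF S_mono])
    show "convex_on {S 0..S M} (Vcall K D r \<sigma> T \<tau>)"
      unfolding S_0 by (rule convex_on_subset[OF Vcall_convex_on[OF assms(1,3,5)]]) auto
  qed (use that assms Vcall_nonneg Vcall_le_add in \<open>auto simp: S_0 S_M\<close>)
  moreover have "piecewise_linear (\<lambda>x. V1 x + V2 x)"
  proof -
    have "piecewise_linear (\<lambda>x. (x - S M) + V (S M))"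
      using piecewise_linear_affine[of 1 "V (S M) - S M"] by (simp add: algebra_simps)
    then show ?thesis
      unfolding V1_eq V2_eq
      by (rule piecewise_linear_add[OF secant_sum_piecewise_linear piecewise_linear_mult_chi_atLeast])
  qed
  moreover have "0 \<le> V1 x + V2 x" for x
    using V_nonneg[of Sstar] unfolding V1_eq V2_def
    by (intro add_nonneg_nonneg secant_sum_nonneg V_nonneg) (simp add: chi_def)
  moreover have "V x = 0" if "x \<le> D" for x
    using that by (simp add: V_def Vcall_def)
  ultimately show ?thesis
    by blast
qed

end
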